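(* Let $h>0$, let $B\subset\mathbb Z^8_h$ be bounded and let $f:\overline B\to\mathbb O$. Then: (i) $D^h\big(C^h_{\partial B}f\big)(y)=0$ for every $y\in B^\circ\cup(\mathbb Z^8_h\setminus B)^\circ$; (ii) if $f(y)=C^h_{\partial B}f(y)$ for every $y\in B$, then $D^hf(y)=0$ for every $y\in B^\circ$.
   Context: $\mathbb O$ is the real octonion algebra with basis $\mathbf e_0=1,\mathbf e_1,\dots,\mathbf e_7$, where $\mathbf e_i\mathbf e_j=-\delta_{ij}+\sum_k\varepsilon_{ijk}\mathbf e_k$ for $1\le i,j\le 7$, $\varepsilon_{ijk}$ totally antisymmetric with $\varepsilon_{ijk}=1$ for $ijk\in\{123,145,176,246,257,347,365\}$; $\overline{\mathbf e}_0=\mathbf e_0$, $\overline{\mathbf e}_l=-\mathbf e_l$ ($l\ge1$). For $h>0$, $\mathbb Z^8_h=(h\mathbb Z)^8$, $e_0,\dots,e_7$ are the standard unit vectors of $\mathbb R^8$, $\chi_A$ is the indicator of $A$. Difference operators: $\partial_l^{+,h}f(x)=(f(x+he_l)-f(x))/h$, $\partial_l^{-,h}f(x)=(f(x)-f(x-he_l))/h$, $\partial_l^h=\frac12(\partial_l^{+,h}+\partial_l^{-,h})$, $D^hf=\sum_{l=0}^7\mathbf e_l\partial_l^hf$. $N(x)=\{x,x\pm he_0,\dots,x\pm he_7\}$; for $A\subset\mathbb Z^8_h$: $\partial A=\{x:\ N(x)\cap A\neq\emptyset,\ N(x)\cap(\mathbb Z^8_h\setminus A)\neq\emptyset\}$,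 $\overline A=A\cup\partial A$, $A^\circ=A\setminus\partial A$. For $x\in\partial B$: $\Sigma(x)=\sum_l[(\partial_l^{+,h}\chi_B(x))^2+(\partial_l^{-,h}\chi_B(x))^2]$, $s(x)=\frac{h^8}{2}\sqrt{\Sigma(x)}$, $n_l^\pm(x)=-2\partial_l^{\pm,h}\chi_B(x)/\sqrt{\Sigma(x)}$, $\int_{\partial B}g\,dS=\sum_{x\in\partial B}g(x)s(x)$. Fundamental solution: $E^1(x)=\frac{1}{(2\pi)^8}\int_{[-\pi,\pi]^8}\frac{\sum_l\overline{\mathbf e}_l\sin u_l}{\sum_l\sin^2u_l}\sin(\sum_lu_lx_l)\,du$ ($x\in\mathbb Z^8$), $E^h(x)=h^{-7}E^1(x/h)$. Star product: $K^h(x,y)*g(x)=-\frac12\sum_{l=0}^7\big(E^h(he_l-x+y)n_l^-(x)+E^h(-he_l-x+y)n_l^+(x)\big)(\mathbf e_lg(x))$ for $x\in\partial B$, $y\in\mathbb Z^8_h$. Discrete Cauchy-Bitsadze operator: $C^h_{\partial B}g(y)=\int_{\partial B}K^h(x,y)*g(x)\,dS(x)$ for $y\in\mathbb Z^8_h$ and $g:\partial B\to\mathbb O$. *)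

theory Defs
  imports "HOL-Analysis.Analysis"
begin

text \<open>Points of R^8 and octonions are both represented as real^8.
  The coordinate / basis index l (0..7) corresponds to ix l.\<close>

type_synonym pt = "real ^ 8"
type_synonym oct = "real ^ 8"

definition ix :: "nat \<Rightarrow> 8" where "ix l = of_nat l"

definition ev :: "nat \<Rightarrow> real ^ 8" where "ev l = axis (ix l) 1"

definition octT :: "(nat \<times> nat \<times> nat) set" where
  "octT = {(1,2,3),(1,4,5),(1,7,6),(2,4,6),(2,5,7),(3,4,7),(3,6,5)}"

definition eps :: "nat \<Rightarrow> nat \<Rightarrow> nat \<Rightarrow> real" where
  "eps i j k =
     (if (i,j,k) \<in> octT \<or> (j,k,i) \<in> octT \<or> (k,i,j) \<in> octT then 1
      else if (j,i,k) \<in> octT \<or> (i,k,j) \<in> octT \<or> (k,j,i) \<in> octT then -1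
      else 0)"

definition bmul :: "nat \<Rightarrow> nat \<Rightarrow> oct" where
  "bmul i j =
     (if i = 0 then ev j
      else if j = 0 then ev i
      else (if i = j then - ev 0 else 0) + (\<Sum>k\<in>{1..7}. eps i j k *\<^sub>R ev k))"

definition omul :: "oct \<Rightarrow> oct \<Rightarrow> oct" where
  "omul a b = (\<Sum>i<8. \<Sum>j<8. (a $ ix i * b $ ix j) *\<^sub>R bmul i j)"

definition Zh :: "real \<Rightarrow> pt set" where
  "Zh h = {x. \<forall>i. \<exists>k::int. x $ i = h * of_int k}"

definition dplus :: "nat \<Rightarrow> real \<Rightarrow> (pt \<Rightarrow> 'a::real_vector) \<Rightarrow> pt \<Rightarrow> 'a" where
  "dplus l h f x = (1 / h) *\<^sub>R (f (x + h *\<^sub>R ev l) - f x)"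

definition dminus :: "nat \<Rightarrow> real \<Rightarrow> (pt \<Rightarrow> 'a::real_vector) \<Rightarrow> pt \<Rightarrow> 'a" where
  "dminus l h f x = (1 / h) *\<^sub>R (f x - f (x - h *\<^sub>R ev l))"

definition dcent :: "nat \<Rightarrow> real \<Rightarrow> (pt \<Rightarrow> 'a::real_vector) \<Rightarrow> pt \<Rightarrow> 'a" where
  "dcent l h f x = (1 / 2) *\<^sub>R (dplus l h f x + dminus l h f x)"

definition Dh :: "real \<Rightarrow> (pt \<Rightarrow> oct) \<Rightarrow> pt \<Rightarrow> oct" where
  "Dh h f x = (\<Sum>l<8. omul (ev l) (dcent l h f x))"

definition nbhd :: "real \<Rightarrow> pt \<Rightarrow> pt set" where
  "nbhd h x = insert x ({x + h *\<^sub>R ev l | l. l < 8} \<union> {x - h *\<^sub>R ev l | l. l < 8})"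

definition bdry :: "real \<Rightarrow> pt set \<Rightarrow> pt set" where
  "bdry h A = {x \<in> Zh h. nbhd h x \<inter> A \<noteq> {} \<and> nbhd h x \<inter> (Zh h - A) \<noteq> {}}"

definition interior_h :: "real \<Rightarrow> pt set \<Rightarrow> pt set" where
  "interior_h h A = A - bdry h A"

definition Sig :: "real \<Rightarrow> pt set \<Rightarrow> pt \<Rightarrow> real" where
  "Sig h B x = (\<Sum>l<8. (dplus l h (indicator B) x)\<^sup>2 + (dminus l h (indicator B) x)\<^sup>2)"

definition sarea :: "real \<Rightarrow> pt set \<Rightarrow> pt \<Rightarrow> real" where
  "sarea h B x = h ^ 8 / 2 * sqrt (Sig h B x)"

definition nplus :: "real \<Rightarrow> pt set \<Rightarrow> nat \<Rightarrow> pt \<Rightarrow> real" where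
  "nplus h B l x = - 2 * dplus l h (indicator B) x / sqrt (Sig h B x)"

definition nminus :: "real \<Rightarrow> pt set \<Rightarrow> nat \<Rightarrow> pt \<Rightarrow> real" where
  "nminus h B l x = - 2 * dminus l h (indicator B) x / sqrt (Sig h B x)"

definition ebar :: "nat \<Rightarrow> oct" where
  "ebar l = (if l = 0 then ev 0 else - ev l)"

definition E1 :: "pt \<Rightarrow> oct" where
  "E1 x = (1 / (2 * pi) ^ 8) *\<^sub>R
     integral (cbox (\<chi> i. - pi) (\<chi> i. pi))
       (\<lambda>u::real^8. (sin (u \<bullet> x) / (\<Sum>l<8. (sin (u $ ix l))\<^sup>2)) *\<^sub>R
                      (\<Sum>l<8. sin (u $ ix l) *\<^sub>R ebar l))"

definition Eh :: "real \<Rightarrow> pt \<Rightarrow> oct" where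
  "Eh h x = (1 / h ^ 7) *\<^sub>R E1 ((1 / h) *\<^sub>R x)"

definition Kstar :: "real \<Rightarrow> pt set \<Rightarrow> pt \<Rightarrow> pt \<Rightarrow> (pt \<Rightarrow> oct) \<Rightarrow> oct" where
  "Kstar h B x y g = (- 1 / 2) *\<^sub>R (\<Sum>l<8.
      omul (nminus h B l x *\<^sub>R Eh h (h *\<^sub>R ev l - x + y)
            + nplus h B l x *\<^sub>R Eh h (- (h *\<^sub>R ev l) - x + y))
           (omul (ev l) (g x)))"

definition Ch :: "real \<Rightarrow> pt set \<Rightarrow> (pt \<Rightarrow> oct) \<Rightarrow> pt \<Rightarrow> oct" where
  "Ch h B g y = (\<Sum>x\<in>bdry h B. sarea h B x *\<^sub>R Kstar h B x y g)"

end

theory Submission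
  imports Defs
begin

(* The Fourier symbol of the central difference Dirac operator is built from q(u) = sum_l sin u_l e_l,
   and E^1(x) is the inverse Fourier transform of sin(u.x) conj(q(u)) / |q(u)|^2 over [-pi,pi]^8.
   Taking central differences of translates turns sin(u.x) into 2 cos(u.z) sin u_k, and the
   alternative law q (conj q w) = |q|^2 w collapses sum_k e_k (E^1(z+e_k) - E^1(z-e_k)) w to
   (2 / (2 pi)^8) (integral of cos(u.z)) w, which vanishes at every nonzero lattice point z.
   The integrand is absolutely integrable because 1/|q(u)| is dominated by the product of the
   |sin u_i|^(-1/8), each of which has integrable singularities.  Hence D^h kills every translate
   of E^h w away from its pole.  In the Cauchy-Bitsadze operator the term with pole at y = x -+ h e_l
   carries the coefficient n_l^-+(x), which is nonzero only when x and x -+ h e_l lie on different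
   sides of B; then y would be a boundary point.  So D^h C^h f vanishes off the boundary, which is (i),
   and (ii) follows because D^h at an interior point only sees values in B, where f = C^h f. *)

section \<open>Octonion algebra\<close>

lemma ix_eq_iff: "i < 8 \<Longrightarrow> j < 8 \<Longrightarrow> ix i = ix j \<longleftrightarrow> i = j"
  unfolding ix_def by (simp add: less_Suc_eq numeral_eq_Suc) (elim disjE; simp)

lemma ex_ix: "\<exists>m<8. i = ix m"
proof (cases i rule: bit0_cases)
  case (of_int z)
  then show ?thesis by (intro exI[of _ "nat z"]) (auto simp: ix_def)
qed

lemma sum_ix: "(\<Sum>l<8. g (ix l)) = (\<Sum>i\<in>UNIV. g i)"
proof -
  have "UNIV = ix ` {..<8}" using ex_ix by auto
  moreover have "inj_on ix {..<8}" using ix_eq_iff by (auto simp: inj_on_def)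
  ultimately show ?thesis by (metis sum.reindex_cong)
qed

lemma vec8_eqI:
  fixes x y :: "real^8"
  assumes "x $ ix 0 = y $ ix 0" "x $ ix 1 = y $ ix 1" "x $ ix 2 = y $ ix 2" "x $ ix 3 = y $ ix 3"
    "x $ ix 4 = y $ ix 4" "x $ ix 5 = y $ ix 5" "x $ ix 6 = y $ ix 6" "x $ ix 7 = y $ ix 7"
  shows "x = y"
proof -
  have "x $ ix m = y $ ix m" if "m < 8" for m
    using that assms by (auto simp: less_Suc_eq numeral_eq_Suc)
  then show ?thesis
    by (metis ex_ix vec_eq_iff)
qed

lemma ev_component: "l < 8 \<Longrightarrow> m < 8 \<Longrightarrow> ev l $ ix m = (if l = m then 1 else 0)"
  unfolding ev_def using ix_eq_iff[of m l] by (auto simp: axis_def)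

lemma sum_lessThan_8:
  "(\<Sum>i<8::nat. f i) = f 0 + f 1 + f 2 + f 3 + f 4 + f 5 + f 6 + (f 7::'a::comm_monoid_add)"
  by (simp add: numeral_eq_Suc add.assoc)

lemma sum_ix_scaleR_ev: "(\<Sum>k<8. q $ ix k *\<^sub>R ev k) = q"
  by (rule vec8_eqI) (simp_all add: sum_component ev_component if_distrib cong: if_cong)

lemma bounded_bilinear_omul: "bounded_bilinear omul"
  unfolding bilinear_conv_bounded_bilinear[symmetric] bilinear_def
  by (auto intro!: linearI simp: omul_def algebra_simps sum.distrib scaleR_sum_right)

interpretation omul: bounded_bilinear omul
  by (rule bounded_bilinear_omul)

lemma omul_component:
  "omul a b $ ix 0 = a$ix 0*b$ix 0 - a$ix 1*b$ix 1 - a$ix 2*b$ix 2 - a$ix 3*b$ix 3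
     - a$ix 4*b$ix 4 - a$ix 5*b$ix 5 - a$ix 6*b$ix 6 - a$ix 7*b$ix 7"
  "omul a b $ ix 1 = a$ix 0*b$ix 1 + a$ix 1*b$ix 0 + a$ix 2*b$ix 3 - a$ix 3*b$ix 2
     + a$ix 4*b$ix 5 - a$ix 5*b$ix 4 - a$ix 6*b$ix 7 + a$ix 7*b$ix 6"
  "omul a b $ ix 2 = a$ix 0*b$ix 2 - a$ix 1*b$ix 3 + a$ix 2*b$ix 0 + a$ix 3*b$ix 1
     + a$ix 4*b$ix 6 + a$ix 5*b$ix 7 - a$ix 6*b$ix 4 - a$ix 7*b$ix 5"
  "omul a b $ ix 3 = a$ix 0*b$ix 3 + a$ix 1*b$ix 2 - a$ix 2*b$ix 1 + a$ix 3*b$ix 0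
     + a$ix 4*b$ix 7 - a$ix 5*b$ix 6 + a$ix 6*b$ix 5 - a$ix 7*b$ix 4"
  "omul a b $ ix 4 = a$ix 0*b$ix 4 - a$ix 1*b$ix 5 - a$ix 2*b$ix 6 - a$ix 3*b$ix 7
     + a$ix 4*b$ix 0 + a$ix 5*b$ix 1 + a$ix 6*b$ix 2 + a$ix 7*b$ix 3"
  "omul a b $ ix 5 = a$ix 0*b$ix 5 + a$ix 1*b$ix 4 - a$ix 2*b$ix 7 + a$ix 3*b$ix 6
     - a$ix 4*b$ix 1 + a$ix 5*b$ix 0 - a$ix 6*b$ix 3 + a$ix 7*b$ix 2"
  "omul a b $ ix 6 = a$ix 0*b$ix 6 + a$ix 1*b$ix 7 + a$ix 2*b$ix 4 - a$ix 3*b$ix 5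
     - a$ix 4*b$ix 2 + a$ix 5*b$ix 3 + a$ix 6*b$ix 0 - a$ix 7*b$ix 1"
  "omul a b $ ix 7 = a$ix 0*b$ix 7 - a$ix 1*b$ix 6 + a$ix 2*b$ix 5 + a$ix 3*b$ix 4
     - a$ix 4*b$ix 3 - a$ix 5*b$ix 2 + a$ix 6*b$ix 1 + a$ix 7*b$ix 0"
  unfolding omul_def sum_lessThan_8 bmul_def
  by (simp_all add: numeral_eq_Suc atLeastAtMostSuc_conv ev_component eps_def octT_def)

definition oconj :: "oct \<Rightarrow> oct" where
  "oconj q = (\<Sum>l<8. q $ ix l *\<^sub>R ebar l)"

lemma oconj_component: "m < 8 \<Longrightarrow> oconj q $ ix m = (if m = 0 then q $ ix 0 else - q $ ix m)"
  unfolding oconj_def ebar_def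
  by (auto simp: sum_component ev_component if_distrib sum_lessThan_8 cong: if_cong)

lemma norm_oct_squared: "(norm (q::oct))\<^sup>2 = (\<Sum>l<8. (q $ ix l)\<^sup>2)"
  unfolding power2_norm_eq_inner inner_vec_def sum_ix[of "\<lambda>i. (q $ i)\<^sup>2"]
  by (simp add: power2_eq_square)

text \<open>The alternative law, which makes E^1 a fundamental solution.\<close>

lemma omul_oconj_cancel: "omul q (omul (oconj q) w) = (norm q)\<^sup>2 *\<^sub>R w"
  by (rule vec8_eqI; simp only: omul_component vector_scaleR_component norm_oct_squared
      sum_lessThan_8; simp add: oconj_component; algebra)

section \<open>An integrable majorant for the kernel of E^1\<close>

lemma sin_ge_quarter:
  fixes t :: real
  assumes "0 \<le> t" "t \<le> pi / 2"
  shows "t / 4 \<le> sin t"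
proof -
  have "\<bar>sin t - t\<bar> \<le> t ^ 3 / 6"
    using Maclaurin_sin_bound[of t 3] assms by (simp add: eval_nat_numeral sin_coeff_def)
  moreover have "t ^ 3 \<le> 4 * t"
  proof -
    have "t * t \<le> 2 * 2"
      using assms pi_less_4 by (intro mult_mono) auto
    then show ?thesis
      using assms(1) mult_left_mono[of "t * t" 4 t] by (simp add: power3_eq_cube)
  qed
  ultimately show ?thesis
    using assms(1) by linarith
qed

lemma integrable_abs_diff_powr:
  fixes a b c e :: real
  assumes "-1 < e"
  shows "(\<lambda>t. \<bar>t - c\<bar> powr e) integrable_on {a..b}"
proof -
  define R where "R = \<bar>a - c\<bar> + \<bar>b - c\<bar>"
  have "R \<ge> 0"
    by (simp add: R_def)
  have right: "(\<lambda>x. \<bar>x\<bar> powr e) integrable_on {0..R}"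
    by (rule integrable_eq[OF integrable_on_powr_from_0[OF assms \<open>R \<ge> 0\<close>]]) simp
  then have left: "(\<lambda>x. \<bar>x\<bar> powr e) integrable_on {-R..0}"
    using Henstock_Kurzweil_Integration.integrable_reflect_real[where f="\<lambda>x. \<bar>x\<bar> powr e" and a=0 and b=R] by simp
  have "(\<lambda>x. \<bar>x\<bar> powr e) integrable_on {-R..R}"
    by (rule Henstock_Kurzweil_Integration.integrable_combine[OF _ _ left right])
      (use \<open>R \<ge> 0\<close> in auto)
  then have "(\<lambda>t. \<bar>1 *\<^sub>R t + - c\<bar> powr e) integrable_on ((\<lambda>x. x + c) ` {-R..R})"
    using integrable_affinity[where f="\<lambda>x. \<bar>x\<bar> powr e" and a="-R" and b=R and m=1 and c="-c"]
    by simp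
  then have "(\<lambda>t. \<bar>t - c\<bar> powr e) integrable_on {c - R..c + R}"
    by (simp add: add.commute)
  then show ?thesis
    by (rule integrable_subinterval_real) (auto simp: R_def)
qed

text \<open>The factor 1/4 comes from \<open>sin_ge_quarter\<close>; the exponent -1/8 is chosen so that the product
  over the eight coordinates dominates the inverse of the norm of the vector (sin u_i)_i.\<close>

definition sin_majorant :: "real \<Rightarrow> real" where
  "sin_majorant t = (\<Sum>c\<in>{-pi, 0, pi}. (\<bar>t - c\<bar> / 4) powr (-1/8))"

lemma sin_majorant_nonneg: "0 \<le> sin_majorant t"
  by (simp add: sin_majorant_def sum_nonneg)

lemma abs_sin_powr_le_sin_majorant:
  assumes "\<bar>t\<bar> \<le> pi" "sin t \<noteq> 0"
  shows "\<bar>sin t\<bar> powr (-1/8) \<le> sin_majorant t"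
proof -
  obtain c where c: "c \<in> {-pi, 0, pi}" "\<bar>t - c\<bar> \<le> pi / 2" "\<bar>sin t\<bar> = \<bar>sin (t - c)\<bar>"
  proof (cases "\<bar>t\<bar> \<le> pi / 2")
    case True
    then show ?thesis
      using that[of 0] by simp
  next
    case False
    then consider "pi / 2 < t" | "t < - (pi / 2)"
      by linarith
    then show ?thesis
    proof cases
      case 1
      then show ?thesis
        using that[of pi] assms(1) by (simp add: sin_diff)
    next
      case 2
      then show ?thesis
        using that[of "-pi"] assms(1) by (simp add: sin_add)
    qed
  qed
  have "sin c = 0"
    using c(1) by auto
  then have "0 < \<bar>t - c\<bar>"
    using assms(2) by auto
  have "\<bar>sin (t - c)\<bar> = sin \<bar>t - c\<bar>"
    using c(2) sin_ge_zero[of "\<bar>t - c\<bar>"] sin_minus[of "c - t"] by (cases "t - c \<ge> 0") auto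
  then have "\<bar>t - c\<bar> / 4 \<le> \<bar>sin t\<bar>"
    using c sin_ge_quarter[of "\<bar>t - c\<bar>"] by simp
  then have "\<bar>sin t\<bar> powr (-1/8) \<le> (\<bar>t - c\<bar> / 4) powr (-1/8)"
    using \<open>0 < \<bar>t - c\<bar>\<close> by (intro powr_mono2') auto
  also have "\<dots> \<le> sin_majorant t"
    unfolding sin_majorant_def using c(1) by (intro member_le_sum) auto
  finally show ?thesis .
qed

lemma set_integrable_sin_majorant: "set_integrable lborel {-pi..pi} sin_majorant"
proof -
  have "(\<lambda>t. \<bar>t - c\<bar> powr (-1/8) / 4 powr (-1/8)) integrable_on {-pi..pi}" for c
    using integrable_abs_diff_powr[of "-1/8" c] by simp
  then have "sin_majorant integrable_on {-pi..pi}"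
    unfolding sin_majorant_def by (intro integrable_sum) (auto simp: powr_divide)
  then have "sin_majorant absolutely_integrable_on {-pi..pi}"
    by (rule nonnegative_absolutely_integrable_1) (simp add: sin_majorant_nonneg)
  moreover have "(\<lambda>t. indicator {-pi..pi} t *\<^sub>R sin_majorant t) \<in> borel_measurable lborel"
    unfolding sin_majorant_def by measurable
  ultimately show ?thesis
    unfolding set_integrable_def by (simp add: integrable_completion)
qed

lemma prod_indicator_Basis:
  "(\<Prod>\<beta>\<in>Basis. indicator {a \<bullet> \<beta>..b \<bullet> \<beta>} (x \<bullet> \<beta>) :: real) = indicator (cbox a b) x"
  by (auto simp: indicator_def mem_box prod_zero)

lemma
  fixes a b :: "'a::euclidean_space"
    and g :: "'a \<Rightarrow> real \<Rightarrow> 'b::{real_normed_field, banach, second_countable_topology}"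
  assumes g: "\<And>\<beta>. \<beta> \<in> Basis \<Longrightarrow> set_integrable lborel {a \<bullet> \<beta>..b \<bullet> \<beta>} (g \<beta>)"
  shows set_integrable_box_prod: "set_integrable lborel (cbox a b) (\<lambda>x. \<Prod>\<beta>\<in>Basis. g \<beta> (x \<bullet> \<beta>))"
    and set_integral_box_prod: "(LINT x:cbox a b|lborel. \<Prod>\<beta>\<in>Basis. g \<beta> (x \<bullet> \<beta>))
      = (\<Prod>\<beta>\<in>Basis. LINT t:{a \<bullet> \<beta>..b \<bullet> \<beta>}|lborel. g \<beta> t)"
proof -
  interpret product_sigma_finite "\<lambda>_::'a. lborel"
    by standard
  define f where "f = (\<lambda>\<beta> t. indicator {a \<bullet> \<beta>..b \<bullet> \<beta>} t *\<^sub>R g \<beta> t)"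
  have f_int: "integrable lborel (f \<beta>)" if "\<beta> \<in> Basis" for \<beta>
    using g[OF that] by (simp add: f_def set_integrable_def)
  have [measurable]: "f \<beta> \<in> borel_measurable borel" if "\<beta> \<in> Basis" for \<beta>
    using f_int[OF that] by (simp add: borel_measurable_integrable)
  define T where "T \<phi> = (\<Sum>\<beta>\<in>Basis. \<phi> \<beta> *\<^sub>R \<beta>)" for \<phi> :: "'a \<Rightarrow> real"
  have [measurable]: "T \<in> measurable (Pi\<^sub>M Basis (\<lambda>_. lborel)) borel"
    unfolding T_def by measurable
  have lborel_T: "lborel = distr (Pi\<^sub>M Basis (\<lambda>_. lborel)) borel T"
    unfolding T_def by (rule lborel_eq)
  define F where "F x = (\<Prod>\<beta>\<in>Basis. f \<beta> (x \<bullet> \<beta>))" for x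
  have [measurable]: "F \<in> borel_measurable borel"
    unfolding F_def by measurable
  have F_T: "F (T \<phi>) = (\<Prod>\<beta>\<in>Basis. f \<beta> (\<phi> \<beta>))" for \<phi>
    unfolding F_def T_def
    by (intro prod.cong refl) (simp add: inner_sum_left inner_Basis if_distrib cong: if_cong)
  have F_eq: "F = (\<lambda>x. indicator (cbox a b) x *\<^sub>R (\<Prod>\<beta>\<in>Basis. g \<beta> (x \<bullet> \<beta>)))"
    by (simp add: fun_eq_iff F_def f_def scaleR_conv_of_real prod.distrib prod_indicator_Basis
        flip: of_real_prod)
  have "integrable lborel F"
    unfolding lborel_T integrable_distr_eq[OF \<open>T \<in> _\<close> \<open>F \<in> _\<close>] F_T
    by (rule product_integrable_prod) (auto intro: f_int)
  then show "set_integrable lborel (cbox a b) (\<lambda>x. \<Prod>\<beta>\<in>Basis. g \<beta> (x \<bullet> \<beta>))"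
    by (simp add: set_integrable_def F_eq)
  have "integral\<^sup>L lborel F = (\<Prod>\<beta>\<in>Basis. integral\<^sup>L lborel (f \<beta>))"
    unfolding lborel_T integral_distr[OF \<open>T \<in> _\<close> \<open>F \<in> _\<close>] F_T
    by (rule product_integral_prod) (auto intro: f_int)
  then show "(LINT x:cbox a b|lborel. \<Prod>\<beta>\<in>Basis. g \<beta> (x \<bullet> \<beta>))
      = (\<Prod>\<beta>\<in>Basis. LINT t:{a \<bullet> \<beta>..b \<bullet> \<beta>}|lborel. g \<beta> t)"
    by (simp add: set_lebesgue_integral_def F_eq f_def)
qed

abbreviation period_cube :: "(real^'n) set" where
  "period_cube \<equiv> cbox (\<chi> i. - pi) (\<chi> i. pi)"

lemma Basis_cart_eq: "(Basis :: (real^'n) set) = (\<lambda>i. axis i 1) ` UNIV"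
  by (auto simp: Basis_vec_def)

lemma prod_Basis_cart: "(\<Prod>\<beta>\<in>(Basis :: (real^'n) set). f (x \<bullet> \<beta>)) = (\<Prod>i\<in>UNIV. f (x $ i))"
  unfolding Basis_cart_eq by (subst prod.reindex) (auto simp: inj_on_def axis_eq_axis inner_axis)

lemma period_cube_Basis: "\<beta> \<in> Basis \<Longrightarrow> {(\<chi> i. - pi) \<bullet> \<beta>..(\<chi> i. pi) \<bullet> (\<beta> :: real^'n)} = {-pi..pi}"
  by (auto simp: Basis_cart_eq inner_axis)

lemma integrable_prod_sin_majorant:
  "(\<lambda>u::real^'n. \<Prod>i\<in>UNIV. sin_majorant (u $ i)) integrable_on period_cube"
proof -
  have "set_integrable lborel period_cube (\<lambda>u::real^'n. \<Prod>\<beta>\<in>Basis. sin_majorant (u \<bullet> \<beta>))"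
    by (rule set_integrable_box_prod) (simp add: period_cube_Basis set_integrable_sin_majorant)
  then show ?thesis
    unfolding prod_Basis_cart by (rule set_borel_integral_eq_integral)
qed

lemma negligible_sin_component_zero: "negligible {u::real^'n. \<exists>i. sin (u $ i) = 0}"
proof -
  have "{u::real^'n. \<exists>i. sin (u $ i) = 0}
      = \<Union>(range (\<lambda>(i, k::int). {u. axis i 1 \<bullet> u = of_int k * pi}))"
    by (auto simp: sin_zero_iff_int2 inner_axis')
  also have "negligible \<dots>"
    by (intro negligible_countable_Union countable_image countableI_type)
      (auto intro!: negligible_hyperplane simp: axis_eq_0_iff)
  finally show ?thesis .
qed

lemma inverse_norm_le_prod_abs_powr:
  fixes s :: "real^'n"
  assumes "\<forall>i. s $ i \<noteq> 0"
  shows "1 / norm s \<le> (\<Prod>i\<in>UNIV. \<bar>s $ i\<bar> powr (-1 / CARD('n)))"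
proof -
  have "0 < norm s"
    using assms by (auto simp: vec_eq_iff)
  have "(norm s powr (-1 / CARD('n))) ^ CARD('n) = norm s powr (CARD('n) * (-1 / CARD('n)))"
    using \<open>0 < norm s\<close> by (simp add: powr_power)
  then have "1 / norm s = (norm s powr (-1 / CARD('n))) ^ CARD('n)"
    using \<open>0 < norm s\<close> by (simp add: powr_minus_divide)
  also have "\<dots> = (\<Prod>i\<in>(UNIV::'n set). norm s powr (-1 / CARD('n)))"
    by simp
  also have "\<dots> \<le> (\<Prod>i\<in>UNIV. \<bar>s $ i\<bar> powr (-1 / CARD('n)))"
    using assms by (intro prod_mono conjI powr_mono2' component_le_norm_cart) auto
  finally show ?thesis .
qed

definition sin_vec :: "real^'n \<Rightarrow> real^'n" where
  "sin_vec u = (\<chi> i. sin (u $ i))"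

lemma norm_sin_vec_squared: "(norm (sin_vec u))\<^sup>2 = (\<Sum>i\<in>UNIV. (sin (u $ i))\<^sup>2)"
  unfolding power2_norm_eq_inner inner_vec_def sin_vec_def by (simp add: power2_eq_square)

lemma E1_component_bound:
  fixes u x :: "real^8"
  assumes "u \<in> period_cube" "\<forall>i. sin (u $ i) \<noteq> 0"
  shows "\<bar>sin (u \<bullet> x) * (sin (u $ j) / (norm (sin_vec u))\<^sup>2)\<bar> \<le> (\<Prod>i\<in>UNIV. sin_majorant (u $ i))"
proof -
  let ?s = "sin_vec u"
  have s: "\<forall>i. ?s $ i \<noteq> 0"
    using assms(2) by (simp add: sin_vec_def)
  then have "0 < norm ?s"
    by (auto simp: vec_eq_iff)
  have "\<bar>sin (u \<bullet> x) * (sin (u $ j) / (norm ?s)\<^sup>2)\<bar> \<le> \<bar>?s $ j\<bar> / (norm ?s)\<^sup>2"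
    by (simp add: sin_vec_def abs_mult divide_right_mono mult_left_le_one_le abs_sin_le_one)
  also have "\<dots> \<le> norm ?s / (norm ?s)\<^sup>2"
    by (intro divide_right_mono component_le_norm_cart) simp
  also have "\<dots> = 1 / norm ?s"
    by (simp add: power2_eq_square)
  also have "\<dots> \<le> (\<Prod>i\<in>UNIV. \<bar>?s $ i\<bar> powr (-1/8))"
    using inverse_norm_le_prod_abs_powr[OF s] by simp
  also have "\<dots> \<le> (\<Prod>i\<in>UNIV. sin_majorant (u $ i))"
  proof (intro prod_mono conjI)
    fix i
    have "- pi \<le> u $ i \<and> u $ i \<le> pi"
      using assms(1) by (simp add: mem_box_cart)
    then have "\<bar>u $ i\<bar> \<le> pi"
      by linarith
    then show "\<bar>?s $ i\<bar> powr (-1/8) \<le> sin_majorant (u $ i)"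
      using assms(2) abs_sin_powr_le_sin_majorant[of "u $ i"] by (simp add: sin_vec_def)
  qed simp
  finally show ?thesis .
qed

lemma absolutely_integrable_E1_component:
  fixes x :: "real^8"
  shows "(\<lambda>u. sin (u \<bullet> x) * (sin (u $ j) / (norm (sin_vec u))\<^sup>2)) absolutely_integrable_on period_cube"
proof -
  define Z where "Z = {u::real^8. \<exists>i. sin (u $ i) = 0}"
  have "negligible Z"
    unfolding Z_def by (rule negligible_sin_component_zero)
  define T where "T = period_cube - Z"
  have T: "T \<in> sets lebesgue"
    unfolding T_def using \<open>negligible Z\<close> by (intro sets.Diff negligible_imp_sets fmeasurableD) auto
  have "(\<lambda>u::real^8. \<Prod>i\<in>UNIV. sin_majorant (u $ i)) integrable_on T"
    using integrable_prod_sin_majorant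
    by (rule integrable_spike_set) (auto intro: negligible_subset[OF \<open>negligible Z\<close>] simp: T_def)
  moreover have "continuous_on T (\<lambda>u. sin (u \<bullet> x) * (sin (u $ j) / (norm (sin_vec u))\<^sup>2))"
  proof -
    have "sin_vec u \<noteq> 0" if "u \<in> T" for u
      using that by (auto simp: T_def Z_def sin_vec_def vec_eq_iff)
    then have "\<forall>u\<in>T. (\<Sum>i\<in>UNIV. (sin (u $ i))\<^sup>2) \<noteq> 0"
      by (simp flip: norm_sin_vec_squared)
    then show ?thesis
      unfolding norm_sin_vec_squared by (intro continuous_intros) auto
  qed
  ultimately have "(\<lambda>u. sin (u \<bullet> x) * (sin (u $ j) / (norm (sin_vec u))\<^sup>2)) absolutely_integrable_on T"
    using E1_component_bound T
    by (intro measurable_bounded_by_integrable_imp_absolutely_integrable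
        continuous_imp_measurable_on_sets_lebesgue) (auto simp: T_def Z_def)
  moreover have "negligible {u \<in> T - period_cube. F u \<noteq> 0}" "negligible {u \<in> period_cube - T. F u \<noteq> 0}"
    for F :: "real^8 \<Rightarrow> real"
    by (auto intro: negligible_subset[OF \<open>negligible Z\<close>] simp: T_def)
  ultimately show ?thesis
    using absolutely_integrable_spike_set_eq by blast
qed

section \<open>E^1 as a fundamental solution\<close>

lemma set_integral_exp_ii_int:
  assumes "c \<in> \<int>" "c \<noteq> 0"
  shows "(LINT t:{-pi..pi}|lborel. exp (\<i> * of_real (t * c))) = 0"
proof -
  define F where "F = (\<lambda>t. exp (\<i> * (of_real t * of_real c)) / (\<i> * of_real c))"
  have "(LINT t:{-pi..pi}|lborel. exp (\<i> * of_real (t * c))) = F pi - F (-pi)"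
    unfolding set_lebesgue_integral_def
  proof (rule integral_FTC_atLeastAtMost)
    fix t :: real
    have "((\<lambda>w. exp (\<i> * (w * of_real c)) / (\<i> * of_real c)) has_field_derivative
        exp (\<i> * (of_real t * of_real c))) (at (of_real t))"
      using assms(2) by (auto intro!: derivative_eq_intros simp: field_simps)
    from has_vector_derivative_real_field[OF this]
    show "(F has_vector_derivative exp (\<i> * of_real (t * c))) (at t within {-pi..pi})"
      by (simp add: F_def)
  qed (auto intro!: continuous_intros)
  moreover have "F pi = F (-pi)"
  proof -
    have "sin (pi * c) = 0"
      using assms(1) sin_times_pi_eq_0[of c] by (simp add: mult.commute)
    then have "exp (\<i> * (of_real pi * of_real c)) = exp (- (\<i> * (of_real pi * of_real c)))"
      by (simp add: complex_eq_iff Re_exp Im_exp flip: of_real_mult)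
    then show ?thesis
      by (simp add: F_def)
  qed
  ultimately show ?thesis
    by simp
qed

lemma has_integral_period_cube_cos_inner:
  fixes z :: "real^'n"
  assumes "\<forall>i. z $ i \<in> \<int>" "z \<noteq> 0"
  shows "((\<lambda>u. cos (u \<bullet> z)) has_integral 0) period_cube"
proof -
  define g where "g = (\<lambda>\<beta> t. exp (\<i> * of_real (t * (z \<bullet> \<beta>))))"
  have g_int: "set_integrable lborel {-pi..pi} (g \<beta>)" for \<beta>
    unfolding g_def by (intro borel_integrable_atLeastAtMost' continuous_intros)
  have prod_g: "(\<Prod>\<beta>\<in>Basis. g \<beta> (u \<bullet> \<beta>)) = exp (\<i> * of_real (u \<bullet> z))" for u
    by (simp add: g_def euclidean_inner[of u z] exp_sum sum_distrib_left)
  have int_exp: "set_integrable lborel period_cube (\<lambda>u. exp (\<i> * of_real (u \<bullet> z)))"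
    using set_integrable_box_prod[of "\<chi> i. - pi" "\<chi> i. pi" g] g_int
    by (simp add: period_cube_Basis prod_g)
  obtain i where "z $ i \<noteq> 0"
    using assms(2) by (auto simp: vec_eq_iff)
  have "(LINT u:period_cube|lborel. exp (\<i> * of_real (u \<bullet> z)))
      = (\<Prod>\<beta>\<in>Basis. LINT t:{-pi..pi}|lborel. g \<beta> t)"
    using set_integral_box_prod[of "\<chi> i. - pi" "\<chi> i. pi" g] g_int
    by (simp add: period_cube_Basis prod_g)
  also have "\<dots> = 0"
  proof (rule prod_zero)
    have "(LINT t:{-pi..pi}|lborel. g (axis i 1) t) = 0"
      using assms(1) \<open>z $ i \<noteq> 0\<close> set_integral_exp_ii_int[of "z $ i"]
      by (simp add: g_def inner_axis)
    then show "\<exists>\<beta>\<in>Basis. (LINT t:{-pi..pi}|lborel. g \<beta> t) = 0"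
      by (auto simp: Basis_cart_eq)
  qed simp
  finally have "((\<lambda>u. exp (\<i> * of_real (u \<bullet> z))) has_integral 0) period_cube"
    using set_borel_integral_eq_integral[OF int_exp] by (metis integrable_integral)
  from has_integral_Re[OF this] show ?thesis
    by (simp add: Re_exp)
qed

definition E1_integrand :: "real^8 \<Rightarrow> real^8 \<Rightarrow> oct" where
  "E1_integrand x u = (sin (u \<bullet> x) / (norm (sin_vec u))\<^sup>2) *\<^sub>R oconj (sin_vec u)"

lemma E1_eq_integral: "E1 x = (1 / (2 * pi) ^ 8) *\<^sub>R integral period_cube (E1_integrand x)"
  unfolding E1_def E1_integrand_def oconj_def norm_oct_squared by (simp add: sin_vec_def)

lemma integrable_E1_integrand: "E1_integrand x integrable_on period_cube"
proof -
  have "E1_integrand x = (\<lambda>u. \<Sum>l<8. (sin (u \<bullet> x) * (sin (u $ ix l) / (norm (sin_vec u))\<^sup>2)) *\<^sub>R ebar l)"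
    by (simp add: fun_eq_iff E1_integrand_def oconj_def scaleR_sum_right sin_vec_def)
  then show ?thesis
    by (simp only:) (intro integrable_sum finite_lessThan integrable_on_scaleR_left
        set_lebesgue_integral_eq_integral(1) absolutely_integrable_E1_component)
qed

lemma E1_integrand_central_difference:
  "E1_integrand (z + ev k) u - E1_integrand (z - ev k) u
    = (2 * cos (u \<bullet> z) * (sin (u $ ix k) / (norm (sin_vec u))\<^sup>2)) *\<^sub>R oconj (sin_vec u)"
proof -
  have "sin (u \<bullet> (z + ev k)) - sin (u \<bullet> (z - ev k)) = 2 * cos (u \<bullet> z) * sin (u $ ix k)"
    by (simp add: inner_add_right inner_diff_right ev_def inner_axis sin_add sin_diff)
  then show ?thesis
    unfolding E1_integrand_def
    by (simp add: scaleR_left_diff_distrib[symmetric] diff_divide_distrib[symmetric])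
qed

lemma sum_ev_omul_sin_vec_oconj:
  assumes "sin_vec u \<noteq> 0"
  shows "(\<Sum>k<8. omul (ev k) (omul ((a * (sin (u $ ix k) / (norm (sin_vec u))\<^sup>2)) *\<^sub>R oconj (sin_vec u)) w))
    = a *\<^sub>R w"
proof -
  have "(\<Sum>k<8. omul (ev k) (omul ((a * (sin (u $ ix k) / (norm (sin_vec u))\<^sup>2)) *\<^sub>R oconj (sin_vec u)) w))
      = (a / (norm (sin_vec u))\<^sup>2) *\<^sub>R omul (\<Sum>k<8. sin (u $ ix k) *\<^sub>R ev k) (omul (oconj (sin_vec u)) w)"
    by (simp add: omul.scaleR_left omul.scaleR_right omul.sum_left scaleR_sum_right)
  also have "\<dots> = a *\<^sub>R w"
    using sum_ix_scaleR_ev[of "sin_vec u"] assms by (simp add: sin_vec_def omul_oconj_cancel)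
  finally show ?thesis .
qed

text \<open>The left-hand side is 2 D^1 applied to z \<mapsto> E^1 z w.\<close>

lemma sum_ev_omul_E1_difference_eq_0:
  assumes "\<forall>i. z $ i \<in> \<int>" "z \<noteq> 0"
  shows "(\<Sum>k<8. omul (ev k) (omul (E1 (z + ev k) - E1 (z - ev k)) w)) = 0"
proof -
  define c :: real where "c = 1 / (2 * pi) ^ 8"
  define G where "G = (\<lambda>k u. (2 * cos (u \<bullet> z) * (sin (u $ ix k) / (norm (sin_vec u))\<^sup>2)) *\<^sub>R
    oconj (sin_vec u))"
  define L where "L = (\<lambda>k v. omul (ev k) (omul v w))"
  have L: "bounded_linear (L k)" for k
    unfolding L_def by (intro bounded_linear_compose[OF omul.bounded_linear_right omul.bounded_linear_left])
  have G_int: "G k integrable_on period_cube" for k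
    using integrable_diff[OF integrable_E1_integrand[of "z + ev k"] integrable_E1_integrand[of "z - ev k"]]
    by (simp add: G_def E1_integrand_central_difference)
  have "E1 (z + ev k) - E1 (z - ev k) = c *\<^sub>R integral period_cube (G k)" for k
    using integral_diff[OF integrable_E1_integrand[of "z + ev k"] integrable_E1_integrand[of "z - ev k"]]
    by (simp add: E1_eq_integral c_def G_def E1_integrand_central_difference scaleR_diff_right)
  then have "(\<Sum>k<8. L k (E1 (z + ev k) - E1 (z - ev k)))
      = c *\<^sub>R (\<Sum>k<8. integral period_cube (L k \<circ> G k))"
    using integral_linear[OF G_int L] by (simp add: L_def omul.scaleR_left omul.scaleR_right scaleR_sum_right)
  also have "\<dots> = c *\<^sub>R integral period_cube (\<lambda>u. \<Sum>k<8. L k (G k u))"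
    using integrable_linear[OF G_int L] by (simp add: integral_sum o_def)
  also have "\<dots> = c *\<^sub>R integral period_cube (\<lambda>u. (2 * cos (u \<bullet> z)) *\<^sub>R w)"
  proof (intro arg_cong[where f="\<lambda>I. c *\<^sub>R I"] integral_spike[OF negligible_sin_component_zero])
    fix u :: "real^8"
    assume "u \<in> period_cube - {u. \<exists>i. sin (u $ i) = 0}"
    then have "sin_vec u \<noteq> 0"
      by (auto simp: sin_vec_def vec_eq_iff)
    then show "(2 * cos (u \<bullet> z)) *\<^sub>R w = (\<Sum>k<8. L k (G k u))"
      using sum_ev_omul_sin_vec_oconj[of u "2 * cos (u \<bullet> z)" w] by (simp add: L_def G_def)
  qed
  also have "\<dots> = 0"
  proof -
    have "((\<lambda>u. (2 * cos (u \<bullet> z)) *\<^sub>R w) has_integral 0) period_cube"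
      using has_integral_scaleR_left[OF has_integral_cmul[OF has_integral_period_cube_cos_inner[OF assms]]]
      by simp
    then show ?thesis
      by (simp add: integral_unique)
  qed
  finally show ?thesis
    by (simp add: L_def)
qed

section \<open>The discrete Dirac operator on the lattice\<close>

lemma Zh_add:
  assumes "x \<in> Zh h" "y \<in> Zh h"
  shows "x + y \<in> Zh h"
  unfolding Zh_def
proof clarify
  fix i
  obtain a :: int where "x $ i = h * of_int a"
    using assms(1) by (auto simp: Zh_def)
  moreover obtain b :: int where "y $ i = h * of_int b"
    using assms(2) by (auto simp: Zh_def)
  ultimately show "\<exists>k::int. (x + y) $ i = h * of_int k"
    by (intro exI[of _ "a + b"]) (simp add: distrib_left)
qed

lemma Zh_uminus:
  assumes "x \<in> Zh h"
  shows "- x \<in> Zh h"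
  unfolding Zh_def
proof clarify
  fix i
  obtain a :: int where "x $ i = h * of_int a"
    using assms by (auto simp: Zh_def)
  then show "\<exists>k::int. (- x) $ i = h * of_int k"
    by (intro exI[of _ "- a"]) simp
qed

lemma Zh_diff: "x \<in> Zh h \<Longrightarrow> y \<in> Zh h \<Longrightarrow> x - y \<in> Zh h"
  using Zh_add[of x h "- y"] Zh_uminus[of y h] by simp

lemma scaleR_ev_in_Zh: "h *\<^sub>R ev l \<in> Zh h"
  unfolding Zh_def ev_def
  by (auto simp: axis_def intro: exI[of _ 1] exI[of _ 0])

lemma Zh_scaled_Ints:
  assumes "x \<in> Zh h" "h \<noteq> 0"
  shows "((1 / h) *\<^sub>R x) $ i \<in> \<int>"
proof -
  obtain k :: int where "x $ i = h * of_int k"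
    using assms(1) by (auto simp: Zh_def)
  then show ?thesis
    using assms(2) by simp
qed

lemma nbhd_subset_Zh: "y \<in> Zh h \<Longrightarrow> nbhd h y \<subseteq> Zh h"
  unfolding nbhd_def using Zh_add Zh_diff scaleR_ev_in_Zh by blast

lemma self_in_nbhd: "y \<in> nbhd h y"
  by (simp add: nbhd_def)

lemma nbhd_plus_in_nbhd: "l < 8 \<Longrightarrow> y + h *\<^sub>R ev l \<in> nbhd h y"
  unfolding nbhd_def by blast

lemma nbhd_minus_in_nbhd: "l < 8 \<Longrightarrow> y - h *\<^sub>R ev l \<in> nbhd h y"
  unfolding nbhd_def by blast

lemma mem_iff_mem_if_not_bdry:
  assumes "y \<in> Zh h" "y \<notin> bdry h B" "a \<in> nbhd h y"
  shows "a \<in> B \<longleftrightarrow> y \<in> B"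
  using assms nbhd_subset_Zh[OF assms(1)] self_in_nbhd[of y h] unfolding bdry_def by blast

lemma bdry_Zh_diff: "B \<subseteq> Zh h \<Longrightarrow> bdry h (Zh h - B) = bdry h B"
  unfolding bdry_def by (auto simp: Diff_Diff_Int Int_absorb1)

lemma nbhd_subset_if_interior_h: "y \<in> interior_h h B \<Longrightarrow> B \<subseteq> Zh h \<Longrightarrow> nbhd h y \<subseteq> B"
  unfolding interior_h_def using mem_iff_mem_if_not_bdry by blast

lemma dcent_eq: "dcent l h F y = (1 / (2 * h)) *\<^sub>R (F (y + h *\<^sub>R ev l) - F (y - h *\<^sub>R ev l))"
  unfolding dcent_def dplus_def dminus_def by (simp add: algebra_simps flip: scaleR_add_right)

lemma Dh_eq: "Dh h F y = (\<Sum>k<8. (1 / (2 * h)) *\<^sub>R omul (ev k) (F (y + h *\<^sub>R ev k) - F (y - h *\<^sub>R ev k)))"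
  unfolding Dh_def dcent_eq by (simp add: omul.scaleR_right)

lemma Dh_cong_nbhd: "(\<And>a. a \<in> nbhd h y \<Longrightarrow> F a = G a) \<Longrightarrow> Dh h F y = Dh h G y"
  unfolding Dh_eq by (simp add: nbhd_plus_in_nbhd nbhd_minus_in_nbhd)

lemma Dh_add: "Dh h (\<lambda>y. F y + G y) y = Dh h F y + Dh h G y"
  unfolding Dh_eq sum.distrib[symmetric]
  by (intro sum.cong refl) (simp add: omul.add_right omul.diff_right algebra_simps)

lemma Dh_scaleR: "Dh h (\<lambda>y. c *\<^sub>R F y) y = c *\<^sub>R Dh h F y"
  unfolding Dh_eq by (simp add: omul.scaleR_right scaleR_sum_right flip: scaleR_diff_right)

lemma Dh_sum: "Dh h (\<lambda>y. \<Sum>i\<in>S. F i y) y = (\<Sum>i\<in>S. Dh h (F i) y)"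
  unfolding Dh_eq
  by (simp add: omul.sum_right omul.diff_right scaleR_sum_right sum.swap[of _ "{..<8::nat}"]
      flip: sum_subtractf)

lemma Dh_omul_Eh_eq_0:
  assumes "h > 0" "p + y \<in> Zh h" "p + y \<noteq> 0"
  shows "Dh h (\<lambda>y. omul (Eh h (p + y)) w) y = 0"
proof -
  define z where "z = (1 / h) *\<^sub>R (p + y)"
  have "\<forall>i. z $ i \<in> \<int>"
    unfolding z_def using Zh_scaled_Ints[OF assms(2)] assms(1) by blast
  have "z \<noteq> 0"
    using assms(1,3) by (simp add: z_def)
  have shift: "(1 / h) *\<^sub>R (p + (y + h *\<^sub>R ev k)) = z + ev k"
      "(1 / h) *\<^sub>R (p + (y - h *\<^sub>R ev k)) = z - ev k" for k
    using assms(1) by (simp_all add: z_def algebra_simps)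
  have "Dh h (\<lambda>y. omul (Eh h (p + y)) w) y
      = (1 / (2 * h) / h ^ 7) *\<^sub>R (\<Sum>k<8. omul (ev k) (omul (E1 (z + ev k) - E1 (z - ev k)) w))"
    unfolding Dh_eq Eh_def shift
    by (simp add: omul.diff_left omul.scaleR_left omul.scaleR_right omul.diff_right scaleR_diff_right
        scaleR_sum_right)
  also have "\<dots> = 0"
    using sum_ev_omul_E1_difference_eq_0[OF \<open>\<forall>i. z $ i \<in> \<int>\<close> \<open>z \<noteq> 0\<close>] by simp
  finally show ?thesis .
qed

lemma nminus_eq_0_if_not_bdry:
  assumes "y \<in> Zh h" "y \<notin> bdry h B" "l < 8"
  shows "nminus h B l (y + h *\<^sub>R ev l) = 0"
  using mem_iff_mem_if_not_bdry[OF assms(1,2) nbhd_plus_in_nbhd[OF assms(3)]]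
  by (simp add: nminus_def dminus_def indicator_def)

lemma nplus_eq_0_if_not_bdry:
  assumes "y \<in> Zh h" "y \<notin> bdry h B" "l < 8"
  shows "nplus h B l (y - h *\<^sub>R ev l) = 0"
  using mem_iff_mem_if_not_bdry[OF assms(1,2) nbhd_minus_in_nbhd[OF assms(3)]]
  by (simp add: nplus_def dplus_def indicator_def)

lemma Dh_scaleR_omul_Eh_eq_0:
  assumes "h > 0" "p \<in> Zh h" "y \<in> Zh h" "p + y = 0 \<Longrightarrow> c = 0"
  shows "c *\<^sub>R Dh h (\<lambda>y. omul (Eh h (p + y)) w) y = 0"
  using Dh_omul_Eh_eq_0[OF assms(1) Zh_add[OF assms(2,3)]] assms(4) by (cases "p + y = 0") auto

text \<open>The pole of each kernel term lies exactly where its normal coefficient vanishes.\<close>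

lemma Dh_Kstar_summand_eq_0:
  assumes "h > 0" "x \<in> Zh h" "y \<in> Zh h" "y \<notin> bdry h B" "l < 8"
  shows "Dh h (\<lambda>y. omul (nminus h B l x *\<^sub>R Eh h (h *\<^sub>R ev l - x + y)
      + nplus h B l x *\<^sub>R Eh h (- (h *\<^sub>R ev l) - x + y)) w) y = 0"
proof -
  have minus: "nminus h B l x *\<^sub>R Dh h (\<lambda>y. omul (Eh h (h *\<^sub>R ev l - x + y)) w) y = 0"
  proof (rule Dh_scaleR_omul_Eh_eq_0[OF assms(1) Zh_diff[OF scaleR_ev_in_Zh assms(2)] assms(3)])
    assume "h *\<^sub>R ev l - x + y = 0"
    then have "x = y + h *\<^sub>R ev l"
      by (simp add: algebra_simps)
    then show "nminus h B l x = 0"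
      using nminus_eq_0_if_not_bdry[OF assms(3-5)] by simp
  qed
  have plus: "nplus h B l x *\<^sub>R Dh h (\<lambda>y. omul (Eh h (- (h *\<^sub>R ev l) - x + y)) w) y = 0"
  proof (rule Dh_scaleR_omul_Eh_eq_0[OF assms(1) Zh_diff[OF Zh_uminus[OF scaleR_ev_in_Zh] assms(2)] assms(3)])
    assume "- (h *\<^sub>R ev l) - x + y = 0"
    then have "x = y - h *\<^sub>R ev l"
      by (simp add: algebra_simps)
    then show "nplus h B l x = 0"
      using nplus_eq_0_if_not_bdry[OF assms(3-5)] by simp
  qed
  show ?thesis
    by (simp only: omul.add_left omul.scaleR_left Dh_add Dh_scaleR minus plus add_0)
qed

lemma Dh_Kstar_eq_0:
  assumes "h > 0" "x \<in> Zh h" "y \<in> Zh h" "y \<notin> bdry h B"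
  shows "Dh h (\<lambda>y. Kstar h B x y g) y = 0"
  unfolding Kstar_def Dh_scaleR Dh_sum
  using Dh_Kstar_summand_eq_0[OF assms] by simp

lemma Dh_Ch_eq_0:
  assumes "h > 0" "y \<in> Zh h" "y \<notin> bdry h B"
  shows "Dh h (Ch h B f) y = 0"
proof -
  have "Dh h (Ch h B f) y = (\<Sum>x\<in>bdry h B. sarea h B x *\<^sub>R Dh h (\<lambda>y. Kstar h B x y f) y)"
    unfolding Ch_def by (simp only: Dh_sum Dh_scaleR)
  also have "\<dots> = 0"
    using Dh_Kstar_eq_0[OF assms(1) _ assms(2,3)] by (simp add: bdry_def)
  finally show ?thesis .
qed

theorem mainTheorem8:
  fixes h :: real and B :: "pt set" and f :: "pt \<Rightarrow> oct"
  assumes "h > 0" and "B \<subseteq> Zh h" and "bounded B"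
  shows "(\<forall>y \<in> interior_h h B \<union> interior_h h (Zh h - B). Dh h (Ch h B f) y = 0)
       \<and> ((\<forall>y \<in> B. f y = Ch h B f y) \<longrightarrow> (\<forall>y \<in> interior_h h B. Dh h f y = 0))"
proof (intro conjI ballI impI)
  fix y
  assume "y \<in> interior_h h B \<union> interior_h h (Zh h - B)"
  then have "y \<in> Zh h" "y \<notin> bdry h B"
    using assms(2) bdry_Zh_diff[OF assms(2)] by (auto simp: interior_h_def)
  then show "Dh h (Ch h B f) y = 0"
    by (rule Dh_Ch_eq_0[OF assms(1)])
next
  fix y
  assume f_eq: "\<forall>y\<in>B. f y = Ch h B f y" and y: "y \<in> interior_h h B"
  have "Dh h f y = Dh h (Ch h B f) y"
    using nbhd_subset_if_interior_h[OF y assms(2)] f_eq by (intro Dh_cong_nbhd) auto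
  also have "\<dots> = 0"
    using y assms(2) by (intro Dh_Ch_eq_0[OF assms(1)]) (auto simp: interior_h_def)
  finally show "Dh h f y = 0" .
qed

end
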